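(* Let $\Sigma=\{a,b,c\}$ and let $L_\infty\subseteq\mathcal{T}_\Sigma$ be the set of $\Sigma$-trees $t$ such that on every infinite branch of $t$ the letter $a$ occurs infinitely often. Then $L_\infty$ is comeager in $\mathcal{T}_\Sigma$.
   Context: The full binary tree is $V=\{L,R\}^*$; a $\Sigma$-tree is a map $t:V\to\Sigma$ and $\mathcal{T}_\Sigma=\Sigma^V$ with the product topology ($\Sigma$ discrete). An infinite branch is an infinite sequence of vertices $\epsilon, d_1, d_1d_2,\dots$ with $d_j\in\{L,R\}$. A set is comeager if its complement is a countable union of nowhere dense sets. *)

theory Defs
  imports "HOL-Analysis.Analysis"
begin

datatype dir = L | R

type_synonym vertex = "dir list"

datatype sigma = a | b | c

definition tree_top :: "(vertex \<Rightarrow> sigma) topology" where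
  "tree_top = product_topology (\<lambda>v. discrete_topology (UNIV :: sigma set)) UNIV"

definition nowhere_dense_in :: "'x topology \<Rightarrow> 'x set \<Rightarrow> bool" where
  "nowhere_dense_in X S \<longleftrightarrow> S \<subseteq> topspace X \<and> X interior_of (X closure_of S) = {}"

definition comeager_in :: "'x topology \<Rightarrow> 'x set \<Rightarrow> bool" where
  "comeager_in X A \<longleftrightarrow> A \<subseteq> topspace X \<and>
     (\<exists>N :: nat \<Rightarrow> 'x set. (\<forall>n. nowhere_dense_in X (N n)) \<and>
        topspace X - A = (\<Union>n. N n))"

definition branch_vertex :: "(nat \<Rightarrow> dir) \<Rightarrow> nat \<Rightarrow> vertex" where
  "branch_vertex d n = map d [0..<n]"

definition L_inf :: "(vertex \<Rightarrow> sigma) set" where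
  "L_inf = {t. \<forall>d :: nat \<Rightarrow> dir. \<exists>\<^sub>\<infinity>n. t (branch_vertex d n) = a}"

end

theory Submission
  imports Defs
begin

text \<open>If some branch of \<open>t\<close> eventually avoids \<open>a\<close>, say from the vertex \<open>u\<close> on, then \<open>t\<close> has
  \<open>a\<close>-free paths of every length starting at \<open>u\<close>. For fixed \<open>u\<close> this property is closed (it asks,
  for each length, for one of finitely many paths) and it has empty interior (a basic open set
  fixes only finitely many vertices, so it contains a tree labelled \<open>a\<close> on all deep vertices).
  As there are countably many vertices, the complement of \<open>L_inf\<close> lies in a countable union
  of closed nowhere dense sets.\<close>

instance dir :: finite
proof
  have "UNIV = {L, R}" using dir.exhaust by blast
  then show "finite (UNIV :: dir set)" by (metis finite.emptyI finite.insertI)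
qed

definition a_free_path :: "(vertex \<Rightarrow> sigma) \<Rightarrow> vertex \<Rightarrow> dir list \<Rightarrow> bool" where
  "a_free_path t u w \<longleftrightarrow> (\<forall>j\<le>length w. t (u @ take j w) \<noteq> a)"

definition long_a_free_paths :: "vertex \<Rightarrow> (vertex \<Rightarrow> sigma) set" where
  "long_a_free_paths u = {t. \<forall>k. \<exists>w. length w = k \<and> a_free_path t u w}"

lemma topspace_tree_top [simp]: "topspace tree_top = UNIV"
  by (simp add: tree_top_def topspace_product_topology)

lemma closedin_tree_top_label: "closedin tree_top {t. P (t v)}"
proof -
  have "continuous_map tree_top (discrete_topology UNIV) (\<lambda>t. t v)"
    unfolding tree_top_def by (rule continuous_map_product_projection) simp
  from closedin_continuous_map_preimage[OF this, of "Collect P"] show ?thesis by simp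
qed

lemma openin_tree_top_cylinder:
  assumes "openin tree_top W" and "t \<in> W"
  obtains F where "finite F" and "\<And>s. (\<forall>v\<in>F. s v = t v) \<Longrightarrow> s \<in> W"
proof -
  obtain U where U: "finite {v. U v \<noteq> UNIV}" "t \<in> Pi\<^sub>E UNIV U" "Pi\<^sub>E UNIV U \<subseteq> W"
    using assms unfolding tree_top_def openin_product_topology_alt by force
  show ?thesis
  proof
    fix s assume agree: "\<forall>v\<in>{v. U v \<noteq> UNIV}. s v = t v"
    have "s v \<in> U v" for v
      using agree U(2) by (cases "U v = UNIV") (auto simp: PiE_iff)
    then have "s \<in> Pi\<^sub>E UNIV U" by (simp add: PiE_iff)
    with U(3) show "s \<in> W" by blast
  qed (fact U(1))
qed

lemma nowhere_dense_in_subset_closedin: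
  assumes "closedin X S" and "X interior_of S = {}" and "T \<subseteq> S"
  shows "nowhere_dense_in X T"
proof -
  have "X closure_of T \<subseteq> S" using assms(1,3) by (rule closure_of_minimal[rotated])
  then have "X interior_of (X closure_of T) = {}"
    using interior_of_mono assms(2) by blast
  moreover have "T \<subseteq> topspace X" using assms(1,3) closedin_subset by blast
  ultimately show ?thesis by (simp add: nowhere_dense_in_def)
qed

lemma closedin_a_free_path: "closedin tree_top {t. a_free_path t u w}"
proof -
  have "{t. a_free_path t u w} = (\<Inter>j\<in>{..length w}. {t. t (u @ take j w) \<noteq> a})"
    by (auto simp: a_free_path_def)
  also have "closedin tree_top \<dots>"
    by (rule closedin_INT) (auto intro: closedin_tree_top_label)
  finally show ?thesis .
qed

lemma closedin_long_a_free_paths: "closedin tree_top (long_a_free_paths u)"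
proof -
  have "long_a_free_paths u = (\<Inter>k. \<Union>w\<in>{w. length w = k}. {t. a_free_path t u w})"
    by (auto simp: long_a_free_paths_def)
  also have "closedin tree_top \<dots>"
    by (intro closedin_INT closedin_Union)
       (use finite_lists_length_eq[of "UNIV :: dir set"] in \<open>auto simp: closedin_a_free_path\<close>)
  finally show ?thesis .
qed

lemma interior_of_long_a_free_paths: "tree_top interior_of (long_a_free_paths u) = {}"
proof (rule ccontr)
  assume "tree_top interior_of (long_a_free_paths u) \<noteq> {}"
  then obtain t where "t \<in> tree_top interior_of (long_a_free_paths u)" by blast
  then obtain F where F: "finite F" "\<And>s. (\<forall>v\<in>F. s v = t v) \<Longrightarrow> s \<in> long_a_free_paths u"
    by (metis openin_interior_of interior_of_subset openin_tree_top_cylinder subsetD)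
  define s where "s v = (if v \<in> F then t v else a)" for v
  define k where "k = Suc (Max (insert 0 (length ` F)))"
  have deep: "v \<notin> F" if "length v \<ge> k" for v
  proof
    assume "v \<in> F"
    then have "length v \<le> Max (insert 0 (length ` F))" using F(1) by simp
    with that show False by (simp add: k_def)
  qed
  have "s \<in> long_a_free_paths u" using F(2) by (simp add: s_def)
  then obtain w where "length w = k" "a_free_path s u w"
    by (auto simp: long_a_free_paths_def)
  then have "s (u @ w) \<noteq> a" by (auto simp: a_free_path_def dest: spec[of _ k])
  moreover have "u @ w \<notin> F" using deep \<open>length w = k\<close> by simp
  ultimately show False by (simp add: s_def)
qed

lemma branch_vertex_add:
  "branch_vertex d (m + j) = branch_vertex d m @ map (\<lambda>i. d (m + i)) [0..<j]"
proof -
  have "map (\<lambda>i. d (m + i)) [0..<j] = map d [m..<m + j]"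
    by (rule nth_equalityI) auto
  moreover have "[0..<m + j] = [0..<m] @ [m..<m + j]" by (rule upt_add_eq_append) simp
  ultimately show ?thesis by (simp add: branch_vertex_def)
qed

lemma not_L_inf_imp_long_a_free_paths:
  assumes "t \<notin> L_inf"
  obtains u where "t \<in> long_a_free_paths u"
proof -
  obtain d where "\<not> (\<exists>\<^sub>\<infinity>n. t (branch_vertex d n) = a)"
    using assms unfolding L_inf_def by blast
  then obtain m where m: "\<And>n. n \<ge> m \<Longrightarrow> t (branch_vertex d n) \<noteq> a"
    unfolding INFM_nat_le by blast
  have path: "a_free_path t (branch_vertex d m) (map (\<lambda>i. d (m + i)) [0..<k])" for k
    unfolding a_free_path_def
  proof (intro allI impI)
    fix j assume "j \<le> length (map (\<lambda>i. d (m + i)) [0..<k])"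
    then have "take j (map (\<lambda>i. d (m + i)) [0..<k]) = map (\<lambda>i. d (m + i)) [0..<j]"
      by (simp add: take_map)
    then show "t (branch_vertex d m @ take j (map (\<lambda>i. d (m + i)) [0..<k])) \<noteq> a"
      using m[of "m + j"] by (simp add: branch_vertex_add)
  qed
  then have "t \<in> long_a_free_paths (branch_vertex d m)"
    unfolding long_a_free_paths_def
  proof (intro CollectI allI)
    fix k
    show "\<exists>w. length w = k \<and> a_free_path t (branch_vertex d m) w"
      using path by (intro exI[of _ "map (\<lambda>i. d (m + i)) [0..<k]"]) simp
  qed
  then show ?thesis by (rule that)
qed

theorem proposition5:
  shows "comeager_in tree_top L_inf"
  unfolding comeager_in_def
proof (intro conjI exI[of _ "\<lambda>n. long_a_free_paths (from_nat n) - L_inf"])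
  show "L_inf \<subseteq> topspace tree_top" by simp
  show "\<forall>n. nowhere_dense_in tree_top (long_a_free_paths (from_nat n) - L_inf)"
    using nowhere_dense_in_subset_closedin[OF closedin_long_a_free_paths
        interior_of_long_a_free_paths] by blast
  show "topspace tree_top - L_inf = (\<Union>n. long_a_free_paths (from_nat n) - L_inf)"
  proof -
    have "(\<Union>n. long_a_free_paths (from_nat n)) = (\<Union>u. long_a_free_paths u)"
      by (metis image_image surj_from_nat)
    moreover have "- L_inf \<subseteq> (\<Union>u. long_a_free_paths u)"
      using not_L_inf_imp_long_a_free_paths by blast
    ultimately show ?thesis by auto
  qed
qed

end
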